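(* Let $k$ be a binary kernel on a non-empty set $\mathcal X$. Then the relation $\sim_k$ is a partial equivalence relation, i.e., it is (i) symmetric and (ii) transitive.
   Context: A kernel on $\mathcal X$ is a symmetric positive semidefinite function $k:\mathcal X\times\mathcal X\to\mathbb R$. A kernel $k$ is binary if $k(x,y)\in\{0,1\}$ for all $x,y\in\mathcal X$. The relation induced by a binary kernel $k$ is $\sim_k=\{(x,y)\in\mathcal X\times\mathcal X : k(x,y)=1\}$. *)

theory Defs
  imports Complex_Main
begin

definition is_kernel :: "'a set \<Rightarrow> ('a \<Rightarrow> 'a \<Rightarrow> real) \<Rightarrow> bool" where
  "is_kernel X k \<longleftrightarrow>
     (\<forall>x\<in>X. \<forall>y\<in>X. k x y = k y x) \<and>
     (\<forall>n::nat. \<forall>xs::nat \<Rightarrow> 'a. \<forall>c::nat \<Rightarrow> real.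
        (\<forall>i<n. xs i \<in> X) \<longrightarrow>
        0 \<le> (\<Sum>i<n. \<Sum>j<n. c i * c j * k (xs i) (xs j)))"

definition binary_kernel :: "'a set \<Rightarrow> ('a \<Rightarrow> 'a \<Rightarrow> real) \<Rightarrow> bool" where
  "binary_kernel X k \<longleftrightarrow> is_kernel X k \<and> (\<forall>x\<in>X. \<forall>y\<in>X. k x y \<in> {0, 1})"

definition induced_rel :: "'a set \<Rightarrow> ('a \<Rightarrow> 'a \<Rightarrow> real) \<Rightarrow> ('a \<times> 'a) set" where
  "induced_rel X k = {(x, y). x \<in> X \<and> y \<in> X \<and> k x y = 1}"

end

theory Submission
  imports Defs
begin

text \<open>For transitivity, evaluate the quadratic form of
  \<open>k\<close> at the points \<open>x, y, z\<close> with coefficients \<open>1, -1, 1\<close>: if \<open>k x y = k y z = 1\<close> but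
  \<open>k x z = 0\<close>, the diagonal terms contribute at most \<open>3\<close> while the cross terms
  contribute \<open>-4\<close>, contradicting positive semidefiniteness.\<close>

lemma is_kernel_sym:
  assumes "is_kernel X k" "x \<in> X" "y \<in> X"
  shows "k x y = k y x"
  using assms unfolding is_kernel_def by blast

lemma is_kernel_psd:
  fixes xs :: "nat \<Rightarrow> 'a" and c :: "nat \<Rightarrow> real"
  assumes "is_kernel X k" "\<And>i. i < n \<Longrightarrow> xs i \<in> X"
  shows "0 \<le> (\<Sum>i<n. \<Sum>j<n. c i * c j * k (xs i) (xs j))"
  using assms unfolding is_kernel_def by blast

lemma is_kernel_three_point:
  assumes "is_kernel X k" "x \<in> X" "y \<in> X" "z \<in> X"
  shows "2 * k x y + 2 * k y z \<le> k x x + k y y + k z z + 2 * k x z"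
proof -
  define xs :: "nat \<Rightarrow> 'a" where "xs i = (if i = 0 then x else if i = 1 then y else z)" for i
  define c :: "nat \<Rightarrow> real" where "c i = (if i = 1 then -1 else 1)" for i
  have "0 \<le> (\<Sum>i<3. \<Sum>j<3. c i * c j * k (xs i) (xs j))"
    using assms by (intro is_kernel_psd) (auto simp: xs_def)
  also have "\<dots> = k x x + k y y + k z z - 2 * k x y + 2 * k x z - 2 * k y z"
    using assms by (simp add: numeral_3_eq_3 lessThan_Suc xs_def c_def is_kernel_sym)
  finally show ?thesis by linarith
qed

lemma sym_induced_rel:
  assumes "is_kernel X k"
  shows "sym (induced_rel X k)"
  using assms unfolding sym_def induced_rel_def by (auto simp: is_kernel_sym)

lemma trans_induced_rel:
  assumes "binary_kernel X k"
  shows "trans (induced_rel X k)"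
proof (rule transI)
  have kernel: "is_kernel X k" and binary: "\<And>x y. x \<in> X \<Longrightarrow> y \<in> X \<Longrightarrow> k x y \<in> {0, 1}"
    using assms unfolding binary_kernel_def by blast+
  fix x y z
  assume "(x, y) \<in> induced_rel X k" "(y, z) \<in> induced_rel X k"
  then have xyz: "x \<in> X" "y \<in> X" "z \<in> X" and "k x y = 1" "k y z = 1"
    by (auto simp: induced_rel_def)
  moreover have "k x x \<le> 1" "k y y \<le> 1" "k z z \<le> 1"
    using binary xyz by fastforce+
  moreover note is_kernel_three_point[OF kernel xyz]
  ultimately have "k x z \<noteq> 0" by linarith
  with binary xyz show "(x, z) \<in> induced_rel X k"
    by (auto simp: induced_rel_def)
qed

theorem lemma2:
  fixes X :: "'a set" and k :: "'a \<Rightarrow> 'a \<Rightarrow> real"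
  assumes "X \<noteq> {}"
    and "binary_kernel X k"
  shows "sym (induced_rel X k) \<and> trans (induced_rel X k)"
  using assms(2) sym_induced_rel trans_induced_rel
  unfolding binary_kernel_def by blast

end
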